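(* Let $d\ge3$ and let $\mathbf z_1,\dots,\mathbf z_d\in\mathbb Z^d$ be a basis of $\mathbb Z^d$ with $|\underline{\mathbf z_1}|\leq|\underline{\mathbf z_2}|\leq|\underline{\mathbf z_3}|$ and $\langle\underline{\mathbf z_1},\underline{\mathbf z_2}\rangle\leq0$. If $d\geq4$, assume moreover $\det\underline\Lambda_{1,n}>|\underline{\mathbf z_2}|\det\underline\Lambda_{1,n-1}$ for $n=3,\dots,d-1$. Suppose $\boldsymbol\alpha\in\mathfrak S_2$ satisfies $\langle\boldsymbol\alpha,\mathbf z_2\rangle\cdot\langle\boldsymbol\alpha_2,\mathbf z_1\rangle\geq0$. Let $\mathbf z\in\Lambda_{1,d-1}$ with $|\underline{\mathbf z}|\leq|\underline{\mathbf z_2}|$ and $\mathbf z\neq\mathbf 0,\pm\mathbf z_2$. Then (i) $|L_{\boldsymbol\alpha}(\mathbf z)|\geq|L_{\boldsymbol\alpha}(\mathbf z_1)|$; (ii) if $\mathbf z$ is not a multiple of $\mathbf z_1$, then \[|L_{\boldsymbol\alpha}(\mathbf z)|\cdot|\underline{\mathbf z}|^{d-1}\geq\frac{D_{1,2}^{d-1}}{D_{2,d-1}B_1^{d-1}}\Big(1-\frac{1}{2B_1B_2}\Big).\]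
   Context: $|\cdot|$ is the Euclidean norm, $\langle\cdot,\cdot\rangle$ the standard inner product. For $\mathbf x=(x_1,\dots,x_d)\in\mathbb R^d$ write $\underline{\mathbf x}=(x_1,\dots,x_{d-1})$. Let $\pi_d=\{\mathbf x\in\mathbb R^d:x_d=1\}$ and $L_{\boldsymbol\alpha}(\mathbf x)=\langle\boldsymbol\alpha,\mathbf x\rangle$ for $\boldsymbol\alpha\in\pi_d$. For given vectors $\mathbf z_1,\mathbf z_2,\dots$: $\Lambda_{k,l}$ is the $\mathbb Z$-span of $\mathbf z_k,\dots,\mathbf z_{k+l-1}$; $\det\underline\Lambda_{k,l}=|\underline{\mathbf z_k}\wedge\dots\wedge\underline{\mathbf z_{k+l-1}}|$ ($1\le l\le d-1$); $D_{k,l}=\det\underline\Lambda_{k,l}/|\underline{\mathbf z_k}|^l$; $B_k=|\underline{\mathbf z_{k+1}}|/|\underline{\mathbf z_k}|$; $R_k=1/(2|\underline{\mathbf z_{k+1}}|\det\underline\Lambda_{k,d-1})$; when $\underline{\mathbf z_k},\dots,\underline{\mathbf z_{k+d-2}}$ are linearly independent, $\boldsymbol\alpha_k$ is the unique point of $\pi_d$ orthogonal to $\mathbf z_k,\dots,\mathbf z_{k+d-2}$ and $\mathfrak S_k=\{\mathbf x\in\pi_d:|\mathbf x-\boldsymbol\alpha_k|\le R_k\}$; whenever $\boldsymbol\alpha_k$ or $\mathfrak S_k$ appears it is implicitly assumed well defined. *)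

theory Defs
  imports Complex_Main "Jordan_Normal_Form.Determinant"
begin

text \<open>Vectors of R^d / Z^d are represented as functions on nat with coordinates
  1..d (value 0 outside {1..d}). The family z_1, z_2, ... is z :: nat => nat => int,
  z k being the k-th vector. The underlined vector keeps coordinates 1..d-1.\<close>

definition vsupp :: "nat \<Rightarrow> (nat \<Rightarrow> 'a::zero) \<Rightarrow> bool" where
  "vsupp d x \<longleftrightarrow> (\<forall>i. i \<notin> {1..d} \<longrightarrow> x i = 0)"

definition rv :: "(nat \<Rightarrow> int) \<Rightarrow> nat \<Rightarrow> real" where
  "rv x = (\<lambda>i. real_of_int (x i))"

definition ip :: "nat \<Rightarrow> (nat \<Rightarrow> real) \<Rightarrow> (nat \<Rightarrow> real) \<Rightarrow> real" where
  "ip d x y = (\<Sum>i=1..d. x i * y i)"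

definition enorm :: "nat \<Rightarrow> (nat \<Rightarrow> real) \<Rightarrow> real" where
  "enorm d x = sqrt (ip d x x)"

definition unorm :: "nat \<Rightarrow> (nat \<Rightarrow> int) \<Rightarrow> real" where
  "unorm d x = enorm (d - 1) (rv x)"

definition Lf :: "nat \<Rightarrow> (nat \<Rightarrow> real) \<Rightarrow> (nat \<Rightarrow> int) \<Rightarrow> real" where
  "Lf d a x = ip d a (rv x)"

definition int_basis :: "nat \<Rightarrow> (nat \<Rightarrow> nat \<Rightarrow> int) \<Rightarrow> bool" where
  "int_basis d z \<longleftrightarrow>
     (\<forall>k\<in>{1..d}. vsupp d (z k)) \<and>
     (\<forall>v. vsupp d v \<longrightarrow> (\<exists>c. v = (\<lambda>j. \<Sum>i=1..d. c i * z i j))) \<and>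
     (\<forall>c. (\<lambda>j. \<Sum>i=1..d. c i * z i j) = (\<lambda>_. 0) \<longrightarrow> (\<forall>i\<in>{1..d}. c i = 0))"

definition Lam :: "(nat \<Rightarrow> nat \<Rightarrow> int) \<Rightarrow> nat \<Rightarrow> nat \<Rightarrow> (nat \<Rightarrow> int) set" where
  "Lam z k l = {(\<lambda>j. \<Sum>i=k..<k+l. c i * z i j) | c. True}"

text \<open>det underline Lambda_{k,l} = |z_k_ wedge ... wedge z_{k+l-1}_| = sqrt of the Gram determinant\<close>
definition detUL :: "nat \<Rightarrow> (nat \<Rightarrow> nat \<Rightarrow> int) \<Rightarrow> nat \<Rightarrow> nat \<Rightarrow> real" where
  "detUL d z k l = sqrt (det (mat l l (\<lambda>(i,j). ip (d - 1) (rv (z (k+i))) (rv (z (k+j))))))"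

definition Dkl :: "nat \<Rightarrow> (nat \<Rightarrow> nat \<Rightarrow> int) \<Rightarrow> nat \<Rightarrow> nat \<Rightarrow> real" where
  "Dkl d z k l = detUL d z k l / unorm d (z k) ^ l"

definition Bk :: "nat \<Rightarrow> (nat \<Rightarrow> nat \<Rightarrow> int) \<Rightarrow> nat \<Rightarrow> real" where
  "Bk d z k = unorm d (z (k+1)) / unorm d (z k)"

definition Rk :: "nat \<Rightarrow> (nat \<Rightarrow> nat \<Rightarrow> int) \<Rightarrow> nat \<Rightarrow> real" where
  "Rk d z k = 1 / (2 * unorm d (z (k+1)) * detUL d z k (d - 1))"

definition ul_indep :: "nat \<Rightarrow> (nat \<Rightarrow> nat \<Rightarrow> int) \<Rightarrow> nat \<Rightarrow> bool" where
  "ul_indep d z k \<longleftrightarrow>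
     (\<forall>c::nat \<Rightarrow> real. (\<forall>j\<in>{1..d-1}. (\<Sum>i=k..k+d-2. c i * real_of_int (z i j)) = 0)
        \<longrightarrow> (\<forall>i\<in>{k..k+d-2}. c i = 0))"

definition pid :: "nat \<Rightarrow> (nat \<Rightarrow> real) set" where
  "pid d = {x. vsupp d x \<and> x d = 1}"

definition alphak :: "nat \<Rightarrow> (nat \<Rightarrow> nat \<Rightarrow> int) \<Rightarrow> nat \<Rightarrow> nat \<Rightarrow> real" where
  "alphak d z k = (THE a. a \<in> pid d \<and> (\<forall>i\<in>{k..k+d-2}. ip d a (rv (z i)) = 0))"

definition Sk :: "nat \<Rightarrow> (nat \<Rightarrow> nat \<Rightarrow> int) \<Rightarrow> nat \<Rightarrow> (nat \<Rightarrow> real) set" where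
  "Sk d z k = {x \<in> pid d. enorm d (\<lambda>i. x i - alphak d z k i) \<le> Rk d z k}"

end

theory Submission
  imports Defs
begin

(*
  Norms and determinants refer to the underlined (projected) vectors. Write
  z = c_1 z_1 + ... + c_{d-1} z_{d-1}. If c_m with m >= 3 were the last nonzero coefficient,
  exchanging z_m for z would multiply the Gram determinant of z_1, ..., z_m by c_m^2 >= 1, while
  Hadamard's inequality bounds the new determinant by
  (det Lambda_{1,m-1})^2 |z|^2 <= (det Lambda_{1,m-1})^2 |z_2|^2 < (det Lambda_{1,m})^2.
  Hence z = c_1 z_1 + c_2 z_2, and since z is short and <z_1, z_2> <= 0, c_1 <> 0 and c_1 c_2 >= 0.
  As alpha_2 is orthogonal to z_2, ..., z_d, Cramer's rule gives
  |L_{alpha_2}(z_1)| det Lambda_{2,d-1} = |det(z_1, ..., z_d)| >= 1, and since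
  |alpha - alpha_2| <= R_2, L_alpha(z_1) keeps the sign of L_{alpha_2}(z_1) and
  |L_alpha(z_1)| >= (1 - |z_1| / (2 |z_3|)) / det Lambda_{2,d-1}. The sign hypothesis makes
  c_1 L_alpha(z_1) and c_2 L_alpha(z_2) of equal sign, which gives (i); for c_2 <> 0,
  Lagrange's identity gives |z| >= det Lambda_{1,2} / |z_1|, which gives (ii).
*)

lemma one_le_of_int_power2: "c \<noteq> 0 \<Longrightarrow> 1 \<le> (real_of_int c)\<^sup>2"
  by (metis of_int_1_le_iff of_int_power zero_less_power2 int_one_le_iff_zero_less)

lemma Lagrange_identity:
  fixes a b p q r :: real
  shows "(a\<^sup>2 * p + 2 * a * b * q + b\<^sup>2 * r) * p = (a * p + b * q)\<^sup>2 + b\<^sup>2 * (p * r - q\<^sup>2)"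
  by (simp add: power2_eq_square algebra_simps)

lemma abs_le_abs_add:
  fixes a b :: "'a :: linordered_idom"
  assumes "0 \<le> a * b"
  shows "\<bar>a\<bar> \<le> \<bar>a + b\<bar>"
  using assms by (auto simp: zero_le_mult_iff abs_if)

lemma abs_le_abs_lincomb:
  fixes c1 c2 :: int and x y :: real
  assumes "c1 \<noteq> 0" "0 \<le> c1 * c2" "0 \<le> x * y"
  shows "\<bar>x\<bar> \<le> \<bar>of_int c1 * x + of_int c2 * y\<bar>"
proof -
  have "1 \<le> \<bar>c1\<bar>" using assms(1) by (auto simp: abs_if)
  hence "(1::real) \<le> \<bar>of_int c1\<bar>" by (simp flip: of_int_abs)
  hence "\<bar>x\<bar> \<le> \<bar>of_int c1\<bar> * \<bar>x\<bar>" using mult_right_mono[of 1 _ "\<bar>x\<bar>"] by simp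
  moreover have c12: "0 \<le> real_of_int (c1 * c2)" using assms(2) by (simp only: of_int_0_le_iff)
  have "0 \<le> real_of_int (c1 * c2) * (x * y)" using mult_nonneg_nonneg[OF c12 assms(3)] .
  hence "\<bar>of_int c1\<bar> * \<bar>x\<bar> \<le> \<bar>of_int c1 * x + of_int c2 * y\<bar>"
    unfolding abs_mult[symmetric] by (intro abs_le_abs_add) (simp add: mult_ac)
  ultimately show ?thesis by linarith
qed

lemma perturbed_sign_abs_ge:
  fixes x l D e :: real
  assumes "0 < D" "1 \<le> \<bar>l\<bar> * D" "\<bar>x - l\<bar> \<le> e / D" "e < 1"
  shows "0 < x * l \<and> (1 - e) / D \<le> \<bar>x\<bar>"
proof -
  have l: "1 / D \<le> \<bar>l\<bar>" using assms(1,2) by (simp add: divide_le_eq mult.commute)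
  moreover have "e / D < 1 / D" using assms(1,4) by (simp add: divide_strict_right_mono)
  ultimately have lt: "\<bar>x - l\<bar> < \<bar>l\<bar>" using assms(3) by linarith
  have "0 < x * l"
  proof (cases "0 < l")
    case True
    thus ?thesis using lt by (simp add: abs_less_iff)
  next
    case False
    hence "l < 0" "x < 0" using lt by (auto simp: abs_less_iff)
    thus ?thesis by (simp add: mult_neg_neg)
  qed
  moreover have "(1 - e) / D = 1 / D - e / D" by (simp add: diff_divide_distrib)
  hence "(1 - e) / D \<le> \<bar>x\<bar>" using l assms(3) by arith
  ultimately show ?thesis ..
qed

section \<open>Inner products and norms\<close>

lemma ip_conv_sum_lessThan: "ip n x y = (\<Sum>j<n. x (Suc j) * y (Suc j))"
  unfolding ip_def by (simp add: sum.atLeast1_atMost_eq)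

lemma ip_commute: "ip n x y = ip n y x"
  unfolding ip_def by (simp add: mult.commute)

lemma ip_sum_left: "ip n (\<lambda>j. \<Sum>l\<in>S. c l * V l j) y = (\<Sum>l\<in>S. c l * ip n (V l) y)"
  unfolding ip_def by (simp add: sum_distrib_left sum_distrib_right mult.assoc sum.swap[of _ S])

lemma ip_sum_right: "ip n y (\<lambda>j. \<Sum>l\<in>S. c l * V l j) = (\<Sum>l\<in>S. c l * ip n y (V l))"
  using ip_sum_left[of n c V S y] by (simp add: ip_commute)

lemma ip_lincomb_left: "ip n (\<lambda>j. a * x j + b * y j) v = a * ip n x v + b * ip n y v"
  unfolding ip_def by (simp add: algebra_simps sum.distrib sum_distrib_left)

lemma ip_lincomb_right: "ip n v (\<lambda>j. a * x j + b * y j) = a * ip n v x + b * ip n v y"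
  using ip_lincomb_left[of n a x b y v] by (simp add: ip_commute)

lemma ip_diff_left: "ip n (\<lambda>j. x j - y j) v = ip n x v - ip n y v"
  unfolding ip_def by (simp add: left_diff_distrib sum_subtractf)

lemma ip_diff_right: "ip n v (\<lambda>j. x j - y j) = ip n v x - ip n v y"
  using ip_diff_left[of n x y v] by (simp add: ip_commute)

lemma ip_lincomb_self:
  "ip n (\<lambda>j. a * x j + b * y j) (\<lambda>j. a * x j + b * y j) = a\<^sup>2 * ip n x x + 2 * a * b * ip n x y + b\<^sup>2 * ip n y y"
  by (simp add: ip_lincomb_left ip_lincomb_right ip_commute[of n y x] power2_eq_square algebra_simps)

lemma ip_self_nonneg: "0 \<le> ip n x x"
  unfolding ip_def by (auto intro: sum_nonneg)

lemma ip_self_eq_0D: "ip n x x = 0 \<Longrightarrow> j \<in> {1..n} \<Longrightarrow> x j = 0"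
  unfolding ip_def by (subst (asm) sum_nonneg_eq_0_iff) auto

lemma ip_split_last: "1 \<le> d \<Longrightarrow> ip d x y = ip (d - 1) x y + x d * y d"
  by (cases d) (auto simp: ip_def)

lemma rv_lincomb: "rv (\<lambda>j. c1 * x j + c2 * y j) = (\<lambda>j. of_int c1 * rv x j + of_int c2 * rv y j)"
  by (simp add: rv_def)

lemma Lf_lincomb: "Lf d a (\<lambda>j. c1 * x j + c2 * y j) = of_int c1 * Lf d a x + of_int c2 * Lf d a y"
  unfolding Lf_def rv_lincomb ip_lincomb_right ..

lemma enorm_nonneg: "0 \<le> enorm n x"
  unfolding enorm_def using ip_self_nonneg by simp

lemma unorm_nonneg: "0 \<le> unorm d x"
  unfolding unorm_def by (rule enorm_nonneg)

lemma unorm_power2: "(unorm d x)\<^sup>2 = ip (d - 1) (rv x) (rv x)"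
  unfolding unorm_def enorm_def using ip_self_nonneg by simp

lemma unorm_le_iff: "unorm d x \<le> unorm d y \<longleftrightarrow> ip (d - 1) (rv x) (rv x) \<le> ip (d - 1) (rv y) (rv y)"
  unfolding unorm_def enorm_def by simp

section \<open>Linear algebra and Gram determinants\<close>

lemma det_nonzero_solvable:
  assumes A: "(A :: 'a :: field mat) \<in> carrier_mat n n" and "det A \<noteq> 0" and b: "b \<in> carrier_vec n"
  obtains x where "x \<in> carrier_vec n" "A *\<^sub>v x = b"
proof -
  obtain B where B: "B \<in> carrier_mat n n" "A * B = 1\<^sub>m n"
    using det_non_zero_imp_unit[OF A assms(2), of undefined] by (auto simp: Units_def ring_mat_def)
  show ?thesis
  proof (rule that)
    show "B *\<^sub>v b \<in> carrier_vec n" using B b by simp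
    have "A *\<^sub>v (B *\<^sub>v b) = (A * B) *\<^sub>v b"
      by (rule assoc_mult_mat_vec[symmetric, OF A B(1) b])
    also have "\<dots> = b" using B b by simp
    finally show "A *\<^sub>v (B *\<^sub>v b) = b" .
  qed
qed

lemma det_nonzero_mult_mat_vec_cancel:
  assumes A: "(A :: 'a :: field mat) \<in> carrier_mat n n" and "det A \<noteq> 0"
    and x: "x \<in> carrier_vec n" and y: "y \<in> carrier_vec n" and "A *\<^sub>v x = A *\<^sub>v y"
  shows "x = y"
proof -
  have "A *\<^sub>v (x - y) = 0\<^sub>v n"
    using assms by (simp add: mult_minus_distrib_mat_vec[OF A x y])
  moreover have "x - y \<in> carrier_vec n" using x y by simp
  ultimately have xy: "x - y = 0\<^sub>v n"
    using det_0_iff_vec_prod_zero_field[OF A] assms(2) by blast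
  show ?thesis
  proof (rule eq_vecI)
    fix i assume "i < dim_vec y"
    hence "(x - y) $ i = 0" using xy y by simp
    thus "x $ i = y $ i" using \<open>i < dim_vec y\<close> by simp
  qed (use x y in simp)
qed

lemma det_mat_2: "det (mat 2 2 f) = f (0,0) * f (1,1) - f (0,1) * (f (1,0) :: 'a :: comm_ring_1)"
  by (subst laplace_expansion_row[of _ 2 0])
    (auto simp: numeral_2_eq_2 cofactor_def mat_delete_def det_single)

definition coord_mat :: "nat \<Rightarrow> (nat \<Rightarrow> nat \<Rightarrow> real) \<Rightarrow> nat \<Rightarrow> real mat" where
  "coord_mat n V k = mat k n (\<lambda>(i,j). V i (Suc j))"

definition gram_mat :: "nat \<Rightarrow> (nat \<Rightarrow> nat \<Rightarrow> real) \<Rightarrow> nat \<Rightarrow> real mat" where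
  "gram_mat n V k = mat k k (\<lambda>(i,j). ip n (V i) (V j))"

lemma gram_mat_carrier [simp]: "gram_mat n V k \<in> carrier_mat k k"
  unfolding gram_mat_def by simp

lemma gram_mat_cong: "(\<And>i. i < k \<Longrightarrow> V i = W i) \<Longrightarrow> gram_mat n V k = gram_mat n W k"
  unfolding gram_mat_def by (intro eq_matI) auto

lemma gram_mat_eq_coord_mat: "gram_mat n V k = coord_mat n V k * transpose_mat (coord_mat n V k)"
  by (rule eq_matI) (auto simp: gram_mat_def coord_mat_def scalar_prod_def ip_conv_sum_lessThan intro!: sum.cong)

lemma det_gram_mat_square: "det (gram_mat n V n) = (det (coord_mat n V n))\<^sup>2"
proof -
  have "coord_mat n V n \<in> carrier_mat n n" by (simp add: coord_mat_def)
  thus ?thesis by (simp add: gram_mat_eq_coord_mat det_mult[of _ n] det_transpose power2_eq_square)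
qed

lemma det_gram_mat_transform:
  assumes E: "E \<in> carrier_mat k k"
    and W: "\<And>i. i < k \<Longrightarrow> W i = (\<lambda>j. \<Sum>l<k. E $$ (i,l) * V l j)"
  shows "det (gram_mat n W k) = (det E)\<^sup>2 * det (gram_mat n V k)"
proof -
  let ?M = "coord_mat n V k"
  have M: "?M \<in> carrier_mat k n" by (simp add: coord_mat_def)
  have "coord_mat n W k = E * ?M"
    using E by (intro eq_matI) (auto simp: coord_mat_def W scalar_prod_def intro!: sum.cong)
  hence "gram_mat n W k = E * ?M * (transpose_mat ?M * transpose_mat E)"
    by (simp add: gram_mat_eq_coord_mat transpose_mult[OF E M])
  also have "\<dots> = E * (?M * (transpose_mat ?M * transpose_mat E))"
    using E M by (intro assoc_mult_mat) auto
  also have "?M * (transpose_mat ?M * transpose_mat E) = ?M * transpose_mat ?M * transpose_mat E"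
    using E M by (intro assoc_mult_mat[symmetric]) auto
  also have "E * (?M * transpose_mat ?M * transpose_mat E) = E * (?M * transpose_mat ?M) * transpose_mat E"
    using E M by (intro assoc_mult_mat[symmetric]) auto
  also have "det \<dots> = det E * det (gram_mat n V k) * det E"
    using E M by (simp add: det_mult[of _ k] det_transpose gram_mat_eq_coord_mat)
  finally show ?thesis by (simp add: power2_eq_square)
qed

lemma det_gram_mat_replace_last:
  "det (gram_mat n (V(k := (\<lambda>j. \<Sum>l<Suc k. t l * V l j))) (Suc k)) = (t k)\<^sup>2 * det (gram_mat n V (Suc k))"
proof -
  define E where "E = mat (Suc k) (Suc k) (\<lambda>(i,l). if i = k then t l else if i = l then 1 else (0::real))"
  have E: "E \<in> carrier_mat (Suc k) (Suc k)" by (simp add: E_def)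
  have "det E = prod_list (diag_mat E)"
    by (rule det_lower_triangular[OF _ E]) (auto simp: E_def)
  also have "diag_mat E = replicate k 1 @ [t k]"
    by (rule nth_equalityI) (auto simp: diag_mat_def E_def nth_append)
  finally have detE: "det E = t k" by simp
  have "(V(k := (\<lambda>j. \<Sum>l<Suc k. t l * V l j))) i = (\<lambda>j. \<Sum>l<Suc k. E $$ (i,l) * V l j)"
    if i: "i < Suc k" for i
  proof
    fix j
    have "(\<Sum>l<Suc k. E $$ (i,l) * V l j) = (\<Sum>l<Suc k. if i = k then t l * V l j else if l = i then V l j else 0)"
      using i by (intro sum.cong) (auto simp: E_def)
    also have "\<dots> = (V(k := (\<lambda>j. \<Sum>l<Suc k. t l * V l j))) i j"
      using i by auto
    finally show "(V(k := (\<lambda>j. \<Sum>l<Suc k. t l * V l j))) i j = (\<Sum>l<Suc k. E $$ (i,l) * V l j)" ..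
  qed
  from det_gram_mat_transform[OF E this] show ?thesis unfolding detE .
qed

lemma det_gram_mat_orth_last:
  assumes "\<And>i. i < k \<Longrightarrow> ip n (V i) q = 0"
  shows "det (gram_mat n (V(k := q)) (Suc k)) = ip n q q * det (gram_mat n V k)"
proof -
  let ?G = "gram_mat n (V(k := q)) (Suc k)"
  have "?G $$ (k,j) = 0" if "j < k" for j
    using that assms[of j] by (simp add: gram_mat_def ip_commute)
  hence "(\<Sum>j<Suc k. ?G $$ (k,j) * cofactor ?G k j) = ?G $$ (k,k) * cofactor ?G k k"
    by (simp add: lessThan_Suc)
  moreover have "mat_delete ?G k k = gram_mat n V k"
    by (intro eq_matI) (auto simp: mat_delete_def gram_mat_def)
  ultimately have "det ?G = ?G $$ (k,k) * det (gram_mat n V k)"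
    using laplace_expansion_row[OF gram_mat_carrier, of k] by (simp add: cofactor_def)
  thus ?thesis by (simp add: gram_mat_def)
qed

lemma det_gram_mat_Suc_eq_0:
  assumes "det (gram_mat n V k) = 0"
  shows "det (gram_mat n V (Suc k)) = 0"
proof -
  obtain t where t: "t \<in> carrier_vec k" "t \<noteq> 0\<^sub>v k" "gram_mat n V k *\<^sub>v t = 0\<^sub>v k"
    using assms det_0_iff_vec_prod_zero_field[OF gram_mat_carrier] by auto
  define u where "u = (\<lambda>j. \<Sum>l<k. t $ l * V l j)"
  have "(\<Sum>m<k. t $ m * ip n (V l) (V m)) = 0" if "l < k" for l
    using arg_cong[OF t(3), of "\<lambda>v. v $ l"] t(1) that
    by (simp add: gram_mat_def scalar_prod_def lessThan_atLeast0 mult.commute)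
  hence "ip n u u = 0"
    unfolding u_def ip_sum_left ip_sum_right by simp
  hence "u j = 0" if "j \<in> {1..n}" for j
    using ip_self_eq_0D that by blast
  hence orth: "ip n (V i) u = 0" for i
    unfolding ip_def by simp
  define t' where "t' = vec (Suc k) (\<lambda>i. if i < k then t $ i else 0)"
  have "t' \<noteq> 0\<^sub>v (Suc k)"
  proof
    assume "t' = 0\<^sub>v (Suc k)"
    have "t $ i = 0" if "i < k" for i
    proof -
      have "t' $ i = 0" using \<open>t' = 0\<^sub>v (Suc k)\<close> that by simp
      thus ?thesis using that by (simp add: t'_def)
    qed
    hence "t = 0\<^sub>v k" using t(1) by (intro eq_vecI) auto
    thus False using t(2) by simp
  qed
  moreover have "gram_mat n V (Suc k) *\<^sub>v t' = 0\<^sub>v (Suc k)"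
  proof (rule eq_vecI)
    fix i assume i: "i < dim_vec (0\<^sub>v (Suc k))"
    have "(gram_mat n V (Suc k) *\<^sub>v t') $ i = (\<Sum>l<k. t $ l * ip n (V i) (V l))"
      using i by (simp add: gram_mat_def scalar_prod_def t'_def lessThan_atLeast0 mult.commute)
    also have "\<dots> = ip n (V i) u" unfolding u_def ip_sum_right ..
    finally show "(gram_mat n V (Suc k) *\<^sub>v t') $ i = 0\<^sub>v (Suc k) $ i" using orth i by simp
  qed (simp add: gram_mat_def)
  moreover have "t' \<in> carrier_vec (Suc k)" by (simp add: t'_def)
  ultimately show ?thesis using det_0_iff_vec_prod_zero_field[OF gram_mat_carrier] by blast
qed

lemma gram_mat_orth_residual:
  assumes "det (gram_mat n V k) \<noteq> 0"
  obtains t where "\<And>i. i < k \<Longrightarrow> ip n (V i) (\<lambda>j. V k j - (\<Sum>l<k. t l * V l j)) = 0"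
proof -
  obtain x where x: "x \<in> carrier_vec k" "gram_mat n V k *\<^sub>v x = vec k (\<lambda>i. ip n (V i) (V k))"
    using det_nonzero_solvable[OF gram_mat_carrier assms] by (metis vec_carrier)
  show ?thesis
  proof (rule that[of "\<lambda>l. x $ l"])
    fix i assume i: "i < k"
    have "(\<Sum>l<k. x $ l * ip n (V i) (V l)) = ip n (V i) (V k)"
      using arg_cong[OF x(2), of "\<lambda>v. v $ i"] i x(1)
      by (simp add: gram_mat_def scalar_prod_def lessThan_atLeast0 mult.commute)
    thus "ip n (V i) (\<lambda>j. V k j - (\<Sum>l<k. x $ l * V l j)) = 0"
      by (simp add: ip_diff_right ip_sum_right)
  qed
qed

(* Gram--Schmidt: r is the squared length of the component of V k orthogonal to V 0, ..., V (k - 1). *)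
lemma det_gram_mat_Suc:
  "\<exists>r. 0 \<le> r \<and> r \<le> ip n (V k) (V k) \<and> det (gram_mat n V (Suc k)) = r * det (gram_mat n V k)"
proof (cases "det (gram_mat n V k) = 0")
  case True
  thus ?thesis using det_gram_mat_Suc_eq_0 ip_self_nonneg by fastforce
next
  case False
  obtain t where orth: "\<And>i. i < k \<Longrightarrow> ip n (V i) (\<lambda>j. V k j - (\<Sum>l<k. t l * V l j)) = 0"
    using gram_mat_orth_residual[OF False] by blast
  define p where "p = (\<lambda>j. \<Sum>l<k. t l * V l j)"
  define q where "q = (\<lambda>j. V k j - p j)"
  have "q = (\<lambda>j. \<Sum>l<Suc k. (if l = k then 1 else - t l) * V l j)"
    by (simp add: q_def p_def sum_negf)
  hence "det (gram_mat n V (Suc k)) = det (gram_mat n (V(k := q)) (Suc k))"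
    using det_gram_mat_replace_last[of n V k "\<lambda>l. if l = k then 1 else - t l"] by simp
  also have "\<dots> = ip n q q * det (gram_mat n V k)"
    using orth by (intro det_gram_mat_orth_last) (simp add: q_def p_def)
  finally have det_eq: "det (gram_mat n V (Suc k)) = ip n q q * det (gram_mat n V k)" .
  have "ip n p q = 0" using orth unfolding p_def ip_sum_left by (simp add: q_def p_def)
  moreover have "V k = (\<lambda>j. p j + q j)" by (simp add: q_def)
  ultimately have "ip n (V k) (V k) = ip n p p + ip n q q"
    using ip_lincomb_left[of n 1 p 1 q] ip_lincomb_right[of n _ 1 p 1 q]
    by (simp add: ip_commute[of n q p])
  thus ?thesis using det_eq ip_self_nonneg[of n p] ip_self_nonneg[of n q] by fastforce
qed

lemma det_gram_mat_nonneg: "0 \<le> det (gram_mat n V k)"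
proof (induction k)
  case 0
  thus ?case by (simp add: gram_mat_def)
next
  case (Suc k)
  thus ?case using det_gram_mat_Suc[of n V k] by auto
qed

lemma det_gram_mat_Suc_le: "det (gram_mat n V (Suc k)) \<le> det (gram_mat n V k) * ip n (V k) (V k)"
proof -
  obtain r where r: "r \<le> ip n (V k) (V k)" "det (gram_mat n V (Suc k)) = r * det (gram_mat n V k)"
    using det_gram_mat_Suc by blast
  show ?thesis
    unfolding r(2) using mult_right_mono[OF r(1) det_gram_mat_nonneg] by (metis mult.commute)
qed

lemma det_gram_mat_2: "det (gram_mat n V 2) = ip n (V 0) (V 0) * ip n (V 1) (V 1) - (ip n (V 0) (V 1))\<^sup>2"
  by (simp add: gram_mat_def det_mat_2 power2_eq_square ip_commute[of n "V (Suc 0)" "V 0"])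

lemma ip_Cauchy_Schwarz: "(ip n x y)\<^sup>2 \<le> ip n x x * ip n y y"
  using det_gram_mat_nonneg[of n "\<lambda>i. if i = 0 then x else y" 2] by (simp add: det_gram_mat_2)

lemma abs_ip_le_enorm: "\<bar>ip n x y\<bar> \<le> enorm n x * enorm n y"
proof -
  have "\<bar>ip n x y\<bar> = sqrt ((ip n x y)\<^sup>2)" by simp
  also have "\<dots> \<le> sqrt (ip n x x * ip n y y)" using ip_Cauchy_Schwarz by (rule real_sqrt_le_mono)
  finally show ?thesis by (simp add: enorm_def real_sqrt_mult)
qed

lemma abs_Lf_diff_le:
  assumes "a \<in> pid d" "b \<in> pid d" "1 \<le> d"
  shows "\<bar>Lf d a x - Lf d b x\<bar> \<le> enorm d (\<lambda>i. a i - b i) * unorm d x"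
proof -
  let ?e = "\<lambda>i. a i - b i"
  have "?e d = 0" using assms by (simp add: pid_def)
  hence "Lf d a x - Lf d b x = ip (d - 1) ?e (rv x)" and "enorm (d - 1) ?e = enorm d ?e"
    unfolding Lf_def ip_diff_left[symmetric] enorm_def using ip_split_last[OF assms(3)] by simp_all
  thus ?thesis using abs_ip_le_enorm[of "d - 1" ?e "rv x"] by (simp add: unorm_def)
qed

lemma detUL_eq_gram: "detUL d z k l = sqrt (det (gram_mat (d - 1) (\<lambda>i. rv (z (k + i))) l))"
  unfolding detUL_def gram_mat_def ..

lemma detUL_nonneg: "0 \<le> detUL d z k l"
  by (simp add: detUL_eq_gram det_gram_mat_nonneg)

section \<open>Short vectors of the lattice\<close>

lemma detUL_2_le_unorm:
  assumes w: "w = (\<lambda>j. c1 * z k j + c2 * z (Suc k) j)" and "c2 \<noteq> 0" and "unorm d (z k) \<noteq> 0"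
  shows "detUL d z k 2 / unorm d (z k) \<le> unorm d w"
proof -
  let ?n = "d - 1" and ?x = "rv (z k)" and ?y = "rv (z (Suc k))"
  define G where "G = ip ?n ?x ?x * ip ?n ?y ?y - (ip ?n ?x ?y)\<^sup>2"
  have "det (gram_mat ?n (\<lambda>i. rv (z (k + i))) 2) = G"
    unfolding det_gram_mat_2 G_def by simp
  hence G: "detUL d z k 2 = sqrt G" "0 \<le> G"
    using det_gram_mat_nonneg[of ?n "\<lambda>i. rv (z (k + i))" 2] unfolding detUL_eq_gram by simp_all
  have "G \<le> (of_int c2)\<^sup>2 * G"
    using mult_right_mono[OF one_le_of_int_power2[OF assms(2)] G(2)] by simp
  also have "\<dots> \<le> (of_int c1 * ip ?n ?x ?x + of_int c2 * ip ?n ?x ?y)\<^sup>2 + (of_int c2)\<^sup>2 * G"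
    by simp
  also have "\<dots> = ((of_int c1)\<^sup>2 * ip ?n ?x ?x + 2 * of_int c1 * of_int c2 * ip ?n ?x ?y
      + (of_int c2)\<^sup>2 * ip ?n ?y ?y) * ip ?n ?x ?x"
    unfolding G_def by (rule Lagrange_identity[symmetric])
  also have "\<dots> = (unorm d w * unorm d (z k))\<^sup>2"
    unfolding power_mult_distrib unorm_power2 w rv_lincomb ip_lincomb_self ..
  finally have "(detUL d z k 2)\<^sup>2 \<le> (unorm d w * unorm d (z k))\<^sup>2"
    using G by simp
  hence "detUL d z k 2 \<le> unorm d w * unorm d (z k)"
    by (rule power2_le_imp_le) (simp add: unorm_nonneg)
  thus ?thesis
    using assms(3) unorm_nonneg[of d "z k"] by (simp add: divide_le_eq)
qed

lemma short_plane_vector_coeffs: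
  fixes a b :: int and x y :: "nat \<Rightarrow> int"
  defines "w \<equiv> \<lambda>j. a * x j + b * y j"
  assumes "0 < unorm d x" "unorm d x \<le> unorm d y" "ip (d - 1) (rv x) (rv y) \<le> 0"
    and "unorm d w \<le> unorm d y" and "w \<noteq> (\<lambda>_. 0)" "w \<noteq> y" "w \<noteq> (\<lambda>j. - y j)"
  shows "a \<noteq> 0 \<and> 0 \<le> a * b"
proof -
  let ?n = "d - 1"
  have xx: "0 < ip ?n (rv x) (rv x)" using assms(2) unorm_power2[of d x] by (metis zero_less_power2 less_irrefl)
  have xy: "ip ?n (rv x) (rv x) \<le> ip ?n (rv y) (rv y)" using assms(3) unfolding unorm_le_iff .
  have short: "(of_int a)\<^sup>2 * ip ?n (rv x) (rv x) + 2 * of_int a * of_int b * ip ?n (rv x) (rv y)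
      + (of_int b)\<^sup>2 * ip ?n (rv y) (rv y) \<le> ip ?n (rv y) (rv y)"
    using assms(5) unfolding unorm_le_iff w_def rv_lincomb ip_lincomb_self .
  have "a \<noteq> 0"
  proof
    assume a: "a = 0"
    have "b \<noteq> 0 \<and> b \<noteq> 1 \<and> b \<noteq> -1"
    proof (intro conjI notI)
      assume "b = 0"
      thus False using assms(6) a by (simp add: w_def)
    next
      assume "b = 1"
      thus False using assms(7) a by (simp add: w_def)
    next
      assume "b = -1"
      thus False using assms(8) a by (simp add: w_def)
    qed
    hence "2 \<le> \<bar>b\<bar>" by linarith
    hence two: "(2::real) \<le> \<bar>of_int b\<bar>" by (simp flip: of_int_abs)
    have "(4::real) \<le> (of_int b)\<^sup>2" using power_mono[OF two, of 2] by simp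
    hence "4 * ip ?n (rv y) (rv y) \<le> (of_int b)\<^sup>2 * ip ?n (rv y) (rv y)"
      using xx xy by (intro mult_right_mono) auto
    thus False using short xx xy a by simp
  qed
  moreover have "0 \<le> a * b"
  proof (rule ccontr)
    assume neg: "\<not> 0 \<le> a * b"
    hence "b \<noteq> 0" by auto
    have "a * b \<le> 0" using neg by simp
    hence ab: "of_int (a * b) \<le> (0::real)" by (simp only: of_int_le_0_iff)
    have "0 \<le> of_int a * of_int b * ip ?n (rv x) (rv y)"
      using mult_nonpos_nonpos[OF ab assms(4)] by simp
    moreover have "ip ?n (rv x) (rv x) \<le> (of_int a)\<^sup>2 * ip ?n (rv x) (rv x)"
      using mult_right_mono[OF one_le_of_int_power2[OF \<open>a \<noteq> 0\<close>]] xx by simp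
    moreover have "ip ?n (rv y) (rv y) \<le> (of_int b)\<^sup>2 * ip ?n (rv y) (rv y)"
      using mult_right_mono[OF one_le_of_int_power2[OF \<open>b \<noteq> 0\<close>]] xx xy by simp
    ultimately show False using short xx by linarith
  qed
  ultimately show ?thesis ..
qed

lemma short_vector_top_coeff_eq_0:
  assumes chain: "\<forall>n\<in>{3..d-1}. detUL d z 1 n > unorm d (z 2) * detUL d z 1 (n - 1)"
    and m: "3 \<le> m" "m \<le> d - 1"
    and w: "w = (\<lambda>j. \<Sum>i=1..m. c i * z i j)" and short: "unorm d w \<le> unorm d (z 2)"
  shows "c m = 0"
proof (rule ccontr)
  assume "c m \<noteq> 0"
  define V where "V = (\<lambda>l. rv (z (1 + l)))"
  define G where "G = (\<lambda>n. det (gram_mat (d - 1) V n))"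
  obtain k where k: "m = Suc k" using m by (cases m) auto
  have rvw: "rv w = (\<lambda>j. \<Sum>l<Suc k. of_int (c (Suc l)) * V l j)"
    unfolding w rv_def V_def k by (simp add: sum.atLeast1_atMost_eq)
  have "(of_int (c m))\<^sup>2 * G m = det (gram_mat (d - 1) (V(k := rv w)) (Suc k))"
    unfolding rvw G_def k by (rule det_gram_mat_replace_last[symmetric])
  also have "\<dots> \<le> det (gram_mat (d - 1) (V(k := rv w)) k) * ip (d - 1) (rv w) (rv w)"
    using det_gram_mat_Suc_le[of "d - 1" "V(k := rv w)" k] by simp
  also have "gram_mat (d - 1) (V(k := rv w)) k = gram_mat (d - 1) V k"
    by (rule gram_mat_cong) simp
  also have "det (gram_mat (d - 1) V k) * ip (d - 1) (rv w) (rv w) = G k * (unorm d w)\<^sup>2"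
    by (simp add: G_def unorm_power2)
  also have "\<dots> \<le> G k * (unorm d (z 2))\<^sup>2"
    using short unorm_nonneg det_gram_mat_nonneg by (auto simp: G_def intro!: mult_left_mono power_mono)
  also have "\<dots> < G m"
  proof -
    have "unorm d (z 2) * detUL d z 1 (m - 1) < detUL d z 1 m" using bspec[OF chain, of m] m by simp
    hence "unorm d (z 2) * sqrt (G k) < sqrt (G m)" by (simp add: detUL_eq_gram G_def V_def k)
    hence "(unorm d (z 2) * sqrt (G k))\<^sup>2 < (sqrt (G m))\<^sup>2"
      using unorm_nonneg by (intro power_strict_mono) (auto simp: G_def det_gram_mat_nonneg)
    thus ?thesis using det_gram_mat_nonneg by (simp add: G_def power_mult_distrib mult.commute)
  qed
  finally have "(of_int (c m))\<^sup>2 * G m < G m" .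
  moreover have "G m \<le> (of_int (c m))\<^sup>2 * G m"
    using mult_right_mono[OF one_le_of_int_power2[OF \<open>c m \<noteq> 0\<close>], of "G m"] det_gram_mat_nonneg
    by (simp add: G_def)
  ultimately show False by linarith
qed

lemma short_Lam_vector_in_plane:
  assumes "3 \<le> d" and chain: "\<forall>n\<in>{3..d-1}. detUL d z 1 n > unorm d (z 2) * detUL d z 1 (n - 1)"
    and "w \<in> Lam z 1 (d - 1)" and short: "unorm d w \<le> unorm d (z 2)"
  obtains c1 c2 :: int where "w = (\<lambda>j. c1 * z 1 j + c2 * z 2 j)"
proof -
  obtain c where "w = (\<lambda>j. \<Sum>i=1..<1 + (d - 1). c i * z i j)"
    using assms(3) unfolding Lam_def by blast
  hence w: "w = (\<lambda>j. \<Sum>i=1..<d. c i * z i j)" using assms(1) by simp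
  have vanish: "c i = 0" if "3 \<le> i" "i < d" for i
  proof (rule ccontr)
    assume "c i \<noteq> 0"
    define S where "S = {i. 3 \<le> i \<and> i < d \<and> c i \<noteq> 0}"
    have S: "finite S" "i \<in> S" using that \<open>c i \<noteq> 0\<close> by (auto simp: S_def)
    define m where "m = Max S"
    have "m \<in> S" using S unfolding m_def by (intro Max_in) auto
    hence m: "3 \<le> m" "m \<le> d - 1" "c m \<noteq> 0" by (auto simp: S_def)
    have "c l = 0" if "m < l" "l < d" for l
    proof (rule ccontr)
      assume "c l \<noteq> 0"
      hence "l \<in> S" using that m by (auto simp: S_def)
      hence "l \<le> m" using S(1) by (simp add: m_def)
      thus False using that by simp
    qed
    hence "(\<Sum>i=1..<d. c i * z i j) = (\<Sum>i=1..m. c i * z i j)" for j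
      using m by (intro sum.mono_neutral_right) auto
    hence "w = (\<lambda>j. \<Sum>i=1..m. c i * z i j)" using w by simp
    with short_vector_top_coeff_eq_0[OF chain m(1,2) this short] m(3) show False by simp
  qed
  have "(\<Sum>i=1..<d. c i * z i j) = (\<Sum>i\<in>{1,2}. c i * z i j)" for j
    using assms(1) vanish by (intro sum.mono_neutral_right) auto
  hence "w = (\<lambda>j. c 1 * z 1 j + c 2 * z 2 j)" using w by simp
  thus ?thesis by (rule that)
qed

section \<open>The points alpha_k\<close>

definition ul_mat :: "nat \<Rightarrow> (nat \<Rightarrow> nat \<Rightarrow> int) \<Rightarrow> nat \<Rightarrow> real mat" where
  "ul_mat d z k = coord_mat (d - 1) (\<lambda>i. rv (z (k + i))) (d - 1)"

definition basis_mat :: "nat \<Rightarrow> (nat \<Rightarrow> nat \<Rightarrow> int) \<Rightarrow> real mat" where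
  "basis_mat d z = coord_mat d (\<lambda>i. rv (z (Suc i))) d"

lemma ul_mat_carrier [simp]: "ul_mat d z k \<in> carrier_mat (d - 1) (d - 1)"
  by (simp add: ul_mat_def coord_mat_def)

lemma basis_mat_carrier [simp]: "basis_mat d z \<in> carrier_mat d d"
  by (simp add: basis_mat_def coord_mat_def)

lemma basis_mat_dims [simp]: "dim_row (basis_mat d z) = d" "dim_col (basis_mat d z) = d"
  by (simp_all add: basis_mat_def coord_mat_def)

lemma ul_mat_dims [simp]: "dim_row (ul_mat d z k) = d - 1" "dim_col (ul_mat d z k) = d - 1"
  by (simp_all add: ul_mat_def coord_mat_def)

lemma detUL_eq_abs_det_ul_mat: "detUL d z k (d - 1) = \<bar>det (ul_mat d z k)\<bar>"
  unfolding detUL_eq_gram ul_mat_def det_gram_mat_square by simp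

lemma ip_pid_eq_ul_mat:
  assumes "a \<in> pid d" "2 \<le> d" "i < d - 1"
  shows "ip d a (rv (z (k + i))) = (ul_mat d z k *\<^sub>v vec (d - 1) (\<lambda>j. a (Suc j))) $ i + rv (z (k + i)) d"
proof -
  have "a d = 1" using assms(1) by (simp add: pid_def)
  hence "ip d a (rv (z (k + i))) = ip (d - 1) a (rv (z (k + i))) + rv (z (k + i)) d"
    using ip_split_last[of d] assms(2) by simp
  moreover have "ip (d - 1) a (rv (z (k + i))) = (ul_mat d z k *\<^sub>v vec (d - 1) (\<lambda>j. a (Suc j))) $ i"
    using assms(3) by (auto simp: ip_conv_sum_lessThan ul_mat_def coord_mat_def scalar_prod_def
        lessThan_atLeast0 mult.commute intro!: sum.cong)
  ultimately show ?thesis by simp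
qed

lemma pid_eqI:
  assumes "a \<in> pid d" "b \<in> pid d" "vec (d - 1) (\<lambda>j. a (Suc j)) = vec (d - 1) (\<lambda>j. b (Suc j))"
  shows "a = b"
proof
  fix j
  show "a j = b j"
  proof (cases "1 \<le> j \<and> j < d")
    case True
    hence j: "j - 1 < d - 1" "Suc (j - 1) = j" by auto
    have "vec (d - 1) (\<lambda>j. a (Suc j)) $ (j - 1) = vec (d - 1) (\<lambda>j. b (Suc j)) $ (j - 1)"
      using assms(3) by simp
    thus ?thesis using j by simp
  next
    case False
    thus ?thesis using assms(1,2) by (cases "j = d") (auto simp: pid_def vsupp_def)
  qed
qed

lemma pid_orth_iff:
  assumes b: "b \<in> pid d" and "2 \<le> d"
  shows "(\<forall>i\<in>{k..k+d-2}. ip d b (rv (z i)) = 0) \<longleftrightarrow>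
    ul_mat d z k *\<^sub>v vec (d - 1) (\<lambda>j. b (Suc j)) = vec (d - 1) (\<lambda>i. - rv (z (k + i)) d)"
    (is "?orth \<longleftrightarrow> ?u = ?r")
proof -
  have "?orth \<longleftrightarrow> (\<forall>i<d-1. ip d b (rv (z (k + i))) = 0)"
  proof
    assume ?orth
    thus "\<forall>i<d-1. ip d b (rv (z (k + i))) = 0" using assms(2) by auto
  next
    assume H: "\<forall>i<d-1. ip d b (rv (z (k + i))) = 0"
    show ?orth
    proof
      fix i assume i: "i \<in> {k..k+d-2}"
      hence "i - k < d - 1" using assms(2) by auto
      hence "ip d b (rv (z (k + (i - k)))) = 0" using H by blast
      thus "ip d b (rv (z i)) = 0" using i by simp
    qed
  qed
  also have "\<dots> \<longleftrightarrow> (\<forall>i<d-1. ?u $ i = ?r $ i)"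
  proof -
    have "ip d b (rv (z (k + i))) = 0 \<longleftrightarrow> ?u $ i = ?r $ i" if "i < d - 1" for i
      using ip_pid_eq_ul_mat[OF b assms(2) that] that by auto
    thus ?thesis by blast
  qed
  also have "\<dots> \<longleftrightarrow> ?u = ?r" by (simp add: vec_eq_iff)
  finally show ?thesis .
qed

lemma ul_indep_imp_det_ul_mat_nonzero:
  assumes "2 \<le> d" "ul_indep d z k"
  shows "det (ul_mat d z k) \<noteq> 0"
proof
  assume "det (ul_mat d z k) = 0"
  hence "det (transpose_mat (ul_mat d z k)) = 0" by (simp add: det_transpose[OF ul_mat_carrier])
  then obtain v where v: "v \<in> carrier_vec (d - 1)" "v \<noteq> 0\<^sub>v (d - 1)"
    "transpose_mat (ul_mat d z k) *\<^sub>v v = 0\<^sub>v (d - 1)"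
    using det_0_iff_vec_prod_zero_field[of "transpose_mat (ul_mat d z k)" "d - 1"] ul_mat_carrier by auto
  obtain e where e: "d = Suc (Suc e)" using assms(1) by (metis add_2_eq_Suc le_Suc_ex)
  have "(\<Sum>i=k..k+d-2. v $ (i - k) * real_of_int (z i j)) = 0" if j: "j \<in> {1..d-1}" for j
  proof -
    have "(\<Sum>i=k..k+d-2. v $ (i - k) * real_of_int (z i j)) = (\<Sum>l<d-1. v $ l * rv (z (k + l)) j)"
      by (simp add: e sum.atLeastAtMost_shift_0[where m = k] atLeast0AtMost lessThan_Suc_atMost rv_def)
    also have "\<dots> = (transpose_mat (ul_mat d z k) *\<^sub>v v) $ (j - 1)"
      using j v(1) by (auto simp: ul_mat_def coord_mat_def scalar_prod_def lessThan_atLeast0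
          mult.commute intro!: sum.cong)
    also have "\<dots> = 0"
    proof -
      have "j - 1 < d - 1" using j e by auto
      thus ?thesis using v(3) by simp
    qed
    finally show ?thesis .
  qed
  hence vanish: "\<forall>i\<in>{k..k+d-2}. v $ (i - k) = 0"
    using assms(2)[unfolded ul_indep_def, rule_format, of "\<lambda>i. v $ (i - k)"] by blast
  have "v = 0\<^sub>v (d - 1)"
  proof (rule eq_vecI)
    fix l assume l: "l < dim_vec (0\<^sub>v (d - 1))"
    hence "k + l \<in> {k..k+d-2}" using e by auto
    thus "v $ l = 0\<^sub>v (d - 1) $ l" using bspec[OF vanish] l by fastforce
  qed (use v(1) in simp)
  thus False using v(2) by simp
qed

lemma alphak_spec:
  assumes "2 \<le> d" "det (ul_mat d z k) \<noteq> 0"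
  shows "alphak d z k \<in> pid d \<and> (\<forall>i\<in>{k..k+d-2}. ip d (alphak d z k) (rv (z i)) = 0)"
proof -
  let ?N = "ul_mat d z k" and ?r = "vec (d - 1) (\<lambda>i. - rv (z (k + i)) d)"
  have "?r \<in> carrier_vec (d - 1)" by simp
  then obtain x where x: "x \<in> carrier_vec (d - 1)" "?N *\<^sub>v x = ?r"
    by (rule det_nonzero_solvable[OF ul_mat_carrier assms(2)])
  define a0 where "a0 = (\<lambda>j. if 1 \<le> j \<and> j < d then x $ (j - 1) else if j = d then 1 else (0::real))"
  have a0_pid: "a0 \<in> pid d" using assms(1) by (simp add: a0_def pid_def vsupp_def)
  have a0_vec: "vec (d - 1) (\<lambda>j. a0 (Suc j)) = x"
  proof (rule eq_vecI)
    fix i assume "i < dim_vec x"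
    hence "i < d - 1" using x(1) by simp
    thus "vec (d - 1) (\<lambda>j. a0 (Suc j)) $ i = x $ i" by (auto simp: a0_def)
  qed (use x(1) in simp)
  have "?N *\<^sub>v vec (d - 1) (\<lambda>j. a0 (Suc j)) = ?r" unfolding a0_vec by (rule x(2))
  hence a0_orth: "\<forall>i\<in>{k..k+d-2}. ip d a0 (rv (z i)) = 0" using pid_orth_iff[OF a0_pid assms(1)] by blast
  have "alphak d z k = a0" unfolding alphak_def
  proof (rule the_equality)
    show "a0 \<in> pid d \<and> (\<forall>i\<in>{k..k+d-2}. ip d a0 (rv (z i)) = 0)" using a0_pid a0_orth ..
  next
    fix b assume b: "b \<in> pid d \<and> (\<forall>i\<in>{k..k+d-2}. ip d b (rv (z i)) = 0)"
    hence "?N *\<^sub>v vec (d - 1) (\<lambda>j. b (Suc j)) = ?r" using pid_orth_iff[OF _ assms(1)] by blast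
    hence "?N *\<^sub>v vec (d - 1) (\<lambda>j. b (Suc j)) = ?N *\<^sub>v vec (d - 1) (\<lambda>j. a0 (Suc j))"
      unfolding a0_vec x(2) .
    hence "vec (d - 1) (\<lambda>j. b (Suc j)) = vec (d - 1) (\<lambda>j. a0 (Suc j))"
      by (rule det_nonzero_mult_mat_vec_cancel[OF ul_mat_carrier assms(2) vec_carrier vec_carrier])
    thus "b = a0" using pid_eqI b a0_pid by blast
  qed
  thus ?thesis using a0_pid a0_orth by simp
qed

lemma int_basis_det_ge_1:
  assumes "int_basis d z"
  shows "1 \<le> \<bar>det (basis_mat d z)\<bar>"
proof -
  have "\<forall>k. \<exists>c. k < d \<longrightarrow> (\<lambda>j. if j = Suc k then 1 else 0) = (\<lambda>j. \<Sum>i=1..d. c i * z i j)"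
  proof
    fix k
    have "vsupp d (\<lambda>j. if j = Suc k then (1::int) else 0)" if "k < d"
      using that by (auto simp: vsupp_def)
    thus "\<exists>c. k < d \<longrightarrow> (\<lambda>j. if j = Suc k then 1 else 0) = (\<lambda>j. \<Sum>i=1..d. c i * z i j)"
      using assms unfolding int_basis_def by blast
  qed
  then obtain C where C: "\<And>k. k < d \<Longrightarrow> (\<lambda>j. if j = Suc k then 1 else 0) = (\<lambda>j. \<Sum>i=1..d. C k i * z i j)"
    by metis
  define Cm where "Cm = mat d d (\<lambda>(k,i). real_of_int (C k (Suc i)))"
  have Cm: "Cm \<in> carrier_mat d d" by (simp add: Cm_def)
  have "Cm * basis_mat d z = 1\<^sub>m d"
  proof (rule eq_matI)
    fix k j assume "k < dim_row (1\<^sub>m d)" "j < dim_col (1\<^sub>m d)"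
    hence k: "k < d" and j: "j < d" by auto
    have "(Cm * basis_mat d z) $$ (k,j) = real_of_int (\<Sum>i=1..d. C k i * z i (Suc j))"
      using k j by (auto simp: Cm_def basis_mat_def coord_mat_def rv_def scalar_prod_def
          lessThan_atLeast0 sum.atLeast1_atMost_eq intro!: sum.cong)
    also have "(\<Sum>i=1..d. C k i * z i (Suc j)) = (if Suc j = Suc k then 1 else 0)"
      using fun_cong[OF C[OF k], of "Suc j"] by simp
    finally show "(Cm * basis_mat d z) $$ (k,j) = 1\<^sub>m d $$ (k,j)" using k j by auto
  qed (use Cm in auto)
  hence "det Cm * det (basis_mat d z) = 1" by (simp add: det_mult[OF Cm basis_mat_carrier, symmetric])
  hence "det (basis_mat d z) \<noteq> 0" by auto
  moreover define D where "D = det (mat d d (\<lambda>(i,j). z (Suc i) (Suc j)))"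
  moreover have "basis_mat d z = map_mat real_of_int (mat d d (\<lambda>(i,j). z (Suc i) (Suc j)))"
    by (intro eq_matI) (auto simp: basis_mat_def coord_mat_def rv_def)
  ultimately have "det (basis_mat d z) = of_int D" "D \<noteq> 0" by simp_all
  moreover have "1 \<le> \<bar>D\<bar>" using \<open>D \<noteq> 0\<close> by (auto simp: abs_if)
  ultimately show ?thesis by (simp flip: of_int_abs)
qed

(* Cramer: replacing the last column of the basis matrix by its product with (a 1, ..., a d)
   keeps the determinant, as a d = 1, and yields the column (L_a(z 1), 0, ..., 0). *)
lemma det_basis_mat_eq:
  assumes "2 \<le> d" "a \<in> pid d" "\<forall>i\<in>{2..d}. ip d a (rv (z i)) = 0"
  shows "\<bar>det (basis_mat d z)\<bar> = \<bar>Lf d a (z 1)\<bar> * \<bar>det (ul_mat d z 2)\<bar>"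
proof -
  let ?A = "basis_mat d z"
  define x where "x = vec d (\<lambda>j. a (Suc j))"
  have Ax: "(?A *\<^sub>v x) $ i = ip d a (rv (z (Suc i)))" if "i < d" for i
    using that by (auto simp: basis_mat_def coord_mat_def x_def ip_conv_sum_lessThan scalar_prod_def
        lessThan_atLeast0 mult.commute intro!: sum.cong)
  define R where "R = replace_col ?A (?A *\<^sub>v x) (d - 1)"
  have R: "R \<in> carrier_mat d d" by (simp add: R_def replace_col_def)
  have "det ?A = x $ (d - 1) * det ?A"
    using assms(1,2) by (simp add: x_def pid_def)
  also have "\<dots> = det R"
    unfolding R_def by (rule cramer_lemma_mat[symmetric, OF basis_mat_carrier]) (use assms(1) in \<open>simp_all add: x_def\<close>)
  also have "\<dots> = (\<Sum>i<d. R $$ (i, d - 1) * cofactor R i (d - 1))"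
    by (rule laplace_expansion_column[OF R]) (use assms(1) in simp)
  also have "\<dots> = (\<Sum>i<d. if i = 0 then Lf d a (z 1) * cofactor R 0 (d - 1) else 0)"
    using Ax assms(1,3) by (intro sum.cong refl) (auto simp: R_def replace_col_def Lf_def)
  also have "\<dots> = Lf d a (z 1) * cofactor R 0 (d - 1)"
    using assms(1) by simp
  also have "mat_delete R 0 (d - 1) = ul_mat d z 2"
    by (intro eq_matI) (auto simp: mat_delete_def R_def replace_col_def basis_mat_def ul_mat_def coord_mat_def)
  hence "cofactor R 0 (d - 1) = (-1) ^ (d - 1) * det (ul_mat d z 2)"
    by (simp add: cofactor_def)
  finally show ?thesis by (simp add: abs_mult)
qed

lemma detUL_alphak_2_bounds:
  assumes "2 \<le> d" "int_basis d z" "ul_indep d z 2"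
  shows "0 < detUL d z 2 (d - 1) \<and> 1 \<le> \<bar>Lf d (alphak d z 2) (z 1)\<bar> * detUL d z 2 (d - 1)"
proof -
  have N: "det (ul_mat d z 2) \<noteq> 0" by (rule ul_indep_imp_det_ul_mat_nonzero[OF assms(1,3)])
  have "alphak d z 2 \<in> pid d" "\<forall>i\<in>{2..d}. ip d (alphak d z 2) (rv (z i)) = 0"
    using alphak_spec[OF assms(1) N] by simp_all
  hence "\<bar>det (basis_mat d z)\<bar> = \<bar>Lf d (alphak d z 2) (z 1)\<bar> * \<bar>det (ul_mat d z 2)\<bar>"
    by (rule det_basis_mat_eq[OF assms(1)])
  with int_basis_det_ge_1[OF assms(2)] N show ?thesis unfolding detUL_eq_abs_det_ul_mat by simp
qed

lemma Lf_Sk_2_bounds: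
  assumes "2 \<le> d" "int_basis d z" "ul_indep d z 2" "0 < unorm d (z 1)" "unorm d (z 1) \<le> unorm d (z 3)"
    and "a \<in> Sk d z 2" and sign: "0 \<le> Lf d a (z 2) * Lf d (alphak d z 2) (z 1)"
  shows "0 \<le> Lf d a (z 1) * Lf d a (z 2)"
    and "(1 - unorm d (z 1) / (2 * unorm d (z 3))) / detUL d z 2 (d - 1) \<le> \<bar>Lf d a (z 1)\<bar>"
proof -
  let ?\<alpha> = "alphak d z 2" and ?De = "detUL d z 2 (d - 1)" and ?e = "unorm d (z 1) / (2 * unorm d (z 3))"
  have De: "0 < ?De" "1 \<le> \<bar>Lf d ?\<alpha> (z 1)\<bar> * ?De"
    using detUL_alphak_2_bounds[OF assms(1-3)] by auto
  have \<alpha>: "?\<alpha> \<in> pid d"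
    using alphak_spec[OF assms(1) ul_indep_imp_det_ul_mat_nonzero[OF assms(1,3)]] by blast
  have a: "a \<in> pid d" "enorm d (\<lambda>i. a i - ?\<alpha> i) \<le> Rk d z 2" using assms(6) by (auto simp: Sk_def)
  have "\<bar>Lf d a (z 1) - Lf d ?\<alpha> (z 1)\<bar> \<le> enorm d (\<lambda>i. a i - ?\<alpha> i) * unorm d (z 1)"
    using abs_Lf_diff_le[OF a(1) \<alpha>] assms(1) by simp
  also have "\<dots> \<le> Rk d z 2 * unorm d (z 1)" using a(2) assms(4) by (intro mult_right_mono) auto
  also have "\<dots> = ?e / ?De" by (simp add: Rk_def)
  finally have "\<bar>Lf d a (z 1) - Lf d ?\<alpha> (z 1)\<bar> \<le> ?e / ?De" .
  moreover have "?e < 1" using assms(4,5) by (simp add: divide_less_eq)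
  ultimately have X: "0 < Lf d a (z 1) * Lf d ?\<alpha> (z 1)" "(1 - ?e) / ?De \<le> \<bar>Lf d a (z 1)\<bar>"
    using perturbed_sign_abs_ge[OF De] by blast+
  have "0 \<le> (Lf d a (z 1) * Lf d ?\<alpha> (z 1)) * (Lf d a (z 2) * Lf d ?\<alpha> (z 1))"
    using mult_nonneg_nonneg[OF less_imp_le[OF X(1)] sign] .
  hence "0 \<le> (Lf d a (z 1) * Lf d a (z 2)) * (Lf d ?\<alpha> (z 1))\<^sup>2"
    by (simp add: power2_eq_square mult_ac)
  moreover have "0 < (Lf d ?\<alpha> (z 1))\<^sup>2" using X(1) by (cases "Lf d ?\<alpha> (z 1) = 0") auto
  ultimately show "0 \<le> Lf d a (z 1) * Lf d a (z 2)" by (auto simp: zero_le_mult_iff)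
  show "(1 - ?e) / ?De \<le> \<bar>Lf d a (z 1)\<bar>" by (rule X(2))
qed

lemma Dkl_Bk_bound_eq:
  assumes "unorm d (z 1) \<noteq> 0" "unorm d (z 2) \<noteq> 0"
  shows "Dkl d z 1 2 ^ (d - 1) / (Dkl d z 2 (d - 1) * Bk d z 1 ^ (d - 1)) * (1 - 1 / (2 * Bk d z 1 * Bk d z 2))
    = (1 - unorm d (z 1) / (2 * unorm d (z 3))) / detUL d z 2 (d - 1)
      * (detUL d z 1 2 / unorm d (z 1)) ^ (d - 1)"
proof -
  define u1 where "u1 = unorm d (z 1)"
  define u2 where "u2 = unorm d (z 2)"
  define u3 where "u3 = unorm d (z 3)"
  define g where "g = detUL d z 1 2"
  define De where "De = detUL d z 2 (d - 1)"
  define m where "m = d - 1"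
  have "Bk d z 1 = u2 / u1" "Bk d z 2 = u3 / u2" "Dkl d z 1 2 = g / u1\<^sup>2" "Dkl d z 2 (d - 1) = De / u2 ^ m"
    by (simp_all add: Bk_def Dkl_def u1_def u2_def u3_def g_def De_def m_def numeral_2_eq_2 numeral_3_eq_3)
  moreover have "1 / (2 * (u2 / u1) * (u3 / u2)) = u1 / (2 * u3)"
    using assms(2) by (simp add: u2_def)
  moreover have "(g / u1\<^sup>2) ^ m / (De / u2 ^ m * (u2 / u1) ^ m) = (g / u1) ^ m / De"
    using assms(1,2) by (simp add: u1_def u2_def power_divide power2_eq_square power_mult_distrib)
  ultimately show ?thesis by (simp add: u1_def u3_def g_def De_def m_def)
qed

theorem lemma3:
  fixes d :: nat and z :: "nat \<Rightarrow> nat \<Rightarrow> int"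
    and a :: "nat \<Rightarrow> real" and w :: "nat \<Rightarrow> int"
  assumes "d \<ge> 3"
    and "int_basis d z"
    and "unorm d (z 1) \<le> unorm d (z 2)" and "unorm d (z 2) \<le> unorm d (z 3)"
    and "ip (d - 1) (rv (z 1)) (rv (z 2)) \<le> 0"
    and "\<forall>n\<in>{3..d-1}. detUL d z 1 n > unorm d (z 2) * detUL d z 1 (n - 1)"
    and "unorm d (z 1) \<noteq> 0"
    and "ul_indep d z 2"
    and "a \<in> Sk d z 2"
    and "Lf d a (z 2) * Lf d (alphak d z 2) (z 1) \<ge> 0"
    and "w \<in> Lam z 1 (d - 1)"
    and "unorm d w \<le> unorm d (z 2)"
    and "w \<noteq> (\<lambda>_. 0)" and "w \<noteq> z 2" and "w \<noteq> (\<lambda>j. - z 2 j)"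
  shows "\<bar>Lf d a w\<bar> \<ge> \<bar>Lf d a (z 1)\<bar> \<and>
         (\<not> (\<exists>m::int. w = (\<lambda>j. m * z 1 j)) \<longrightarrow>
         \<bar>Lf d a w\<bar> * unorm d w ^ (d - 1) \<ge>
           Dkl d z 1 2 ^ (d - 1) / (Dkl d z 2 (d - 1) * Bk d z 1 ^ (d - 1))
             * (1 - 1 / (2 * Bk d z 1 * Bk d z 2)))"
proof -
  have d2: "2 \<le> d" and u1: "0 < unorm d (z 1)" using assms(1,7) unorm_nonneg[of d "z 1"] by auto
  obtain c1 c2 where w: "w = (\<lambda>j. c1 * z 1 j + c2 * z 2 j)"
    using short_Lam_vector_in_plane[OF assms(1,6,11,12)] .
  have c: "c1 \<noteq> 0" "0 \<le> c1 * c2"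
    using short_plane_vector_coeffs[where x = "z 1" and y = "z 2" and a = c1 and b = c2 and d = d]
      u1 assms(3,5,12-15) unfolding w by blast+
  have XY: "0 \<le> Lf d a (z 1) * Lf d a (z 2)"
    and X: "(1 - unorm d (z 1) / (2 * unorm d (z 3))) / detUL d z 2 (d - 1) \<le> \<bar>Lf d a (z 1)\<bar>"
    using Lf_Sk_2_bounds[OF d2 assms(2,8) u1 _ assms(9,10)] assms(3,4) by auto
  have part1: "\<bar>Lf d a (z 1)\<bar> \<le> \<bar>Lf d a w\<bar>"
    unfolding w Lf_lincomb using abs_le_abs_lincomb[OF c XY] .
  moreover have "Dkl d z 1 2 ^ (d - 1) / (Dkl d z 2 (d - 1) * Bk d z 1 ^ (d - 1)) * (1 - 1 / (2 * Bk d z 1 * Bk d z 2))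
      \<le> \<bar>Lf d a w\<bar> * unorm d w ^ (d - 1)" if "\<not> (\<exists>m::int. w = (\<lambda>j. m * z 1 j))"
  proof -
    have "c2 \<noteq> 0" using that w by auto
    moreover have "w = (\<lambda>j. c1 * z 1 j + c2 * z (Suc 1) j)" using w by (simp add: numeral_2_eq_2)
    ultimately have "detUL d z 1 2 / unorm d (z 1) \<le> unorm d w"
      using detUL_2_le_unorm u1 by simp
    hence bound: "(1 - unorm d (z 1) / (2 * unorm d (z 3))) / detUL d z 2 (d - 1)
        * (detUL d z 1 2 / unorm d (z 1)) ^ (d - 1) \<le> \<bar>Lf d a w\<bar> * unorm d w ^ (d - 1)"
      using X part1 u1 detUL_nonneg by (intro mult_mono power_mono) auto
    have u2: "unorm d (z 2) \<noteq> 0" using u1 assms(3) by linarith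
    show ?thesis unfolding Dkl_Bk_bound_eq[OF assms(7) u2] by (rule bound)
  qed
  ultimately show ?thesis by blast
qed

end
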